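(* For every round $\ell\ge\lceil n/2\rceil$ of Algorithm 2, $$\mathbb{E}\Big[v\big(\{e^{(\ell)}\}\ \big|\ \mathrm{ALG}^{\ge\ell+1}\big)\ \Big|\ L^{\le\ell},\,T^{\ge\ell+1}\Big]\ \ge\ \frac{1}{\ell}\Big(v(M^{(\ell)})-v(T^{\ge\ell+1})\Big),$$ where $\{e^{(\ell)}\}$ is read as $\emptyset$ if there is no tentative edge in round $\ell$.
   Context: Submodular secretary matching setting. Let $G=(L\cup R,E)$ be a bipartite graph with $|L|=n$, and $v\colon 2^E\to\mathbb{R}_{\ge0}$ monotone and submodular; for $S,S'\subseteq E$, $v(S\mid S')=v(S\cup S')-v(S')$. The vertices of $L$ arrive one per round in uniformly random order; on arrival of $u\in L$ its incident edges are revealed; $L^{\le\ell}$ denotes the set of vertices of $L$ arriving in rounds $1,\dots,\ell$. $\mathcal{A}$ is an offline algorithm that for every $L'\subseteq L$ returns a matching $\mathcal{A}(L'\cup R)$ of the subgraph induced by $L'\cup R$ with value at least $\alpha$ times the maximum value of $v$ over matchings of that subgraph ($\alpha\in(0,1]$), depending only on the set $L'$. Algorithm 2: it rejects the vertices arriving in rounds $1,\dots,\lceil n/2\rceil-1$; in each round $\ell\ge\lceil n/2\rceil$ with arriving vertex $u$, it computes $M^{(\ell)}=\mathcal{A}(L^{\le\ell}\cup R)$, lets $e^{(\ell)}$ be the edge incident to $u$ in $M^{(\ell)}$ (the tentative edge; none if $u$ is unmatched), and if $e^{(\ell)}$ exists and the set of accepted edges together with $e^{(\ell)}$ is a matching,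 accepts $e^{(\ell)}$. $T^{\ge\ell}$ is the set of tentative edges of rounds $\ell,\dots,n$, and $\mathrm{ALG}^{\ge\ell}$ is the set of edges accepted in rounds $\ell,\dots,n$. *)

theory Defs
  imports "HOL-Probability.Probability"
begin

definition is_matching :: "('l \<times> 'r) set \<Rightarrow> bool" where
  "is_matching M \<longleftrightarrow>
     (\<forall>e\<in>M. \<forall>e'\<in>M. e \<noteq> e' \<longrightarrow> fst e \<noteq> fst e' \<and> snd e \<noteq> snd e')"

definition matchings_of :: "('l \<times> 'r) set \<Rightarrow> 'l set \<Rightarrow> 'r set \<Rightarrow> ('l \<times> 'r) set set" where
  "matchings_of E L' R = {M. M \<subseteq> E \<inter> (L' \<times> R) \<and> is_matching M}"

definition marg :: "('e set \<Rightarrow> real) \<Rightarrow> 'e set \<Rightarrow> 'e set \<Rightarrow> real" where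
  "marg v X Y = v (X \<union> Y) - v Y"

text \<open>Arrival orders: lists enumerating L without repetition; round i (1-based)
  sees vertex pi ! (i - 1), and L^{<= l} = set (take l pi).\<close>
definition arrival_orders :: "'l set \<Rightarrow> 'l list set" where
  "arrival_orders L = {\<pi>. distinct \<pi> \<and> set \<pi> = L}"

text \<open>The set consisting of the tentative edge of round l (empty if there is none):
  the edge of M^(l) = A(L^{<= l}) incident to the vertex arriving in round l.\<close>
definition tent :: "('l set \<Rightarrow> ('l \<times> 'r) set) \<Rightarrow> 'l list \<Rightarrow> nat \<Rightarrow> ('l \<times> 'r) set" where
  "tent A \<pi> l = {e \<in> A (set (take l \<pi>)). fst e = \<pi> ! (l - 1)}"

definition Tge :: "('l set \<Rightarrow> ('l \<times> 'r) set) \<Rightarrow> 'l list \<Rightarrow> nat \<Rightarrow> ('l \<times> 'r) set" where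
  "Tge A \<pi> l = (\<Union>i\<in>{l..length \<pi>}. tent A \<pi> i)"

text \<open>Edges accepted by Algorithm 2 in rounds 1..i (rounds before ceil(n/2) reject).\<close>
fun acc :: "('l set \<Rightarrow> ('l \<times> 'r) set) \<Rightarrow> 'l list \<Rightarrow> nat \<Rightarrow> ('l \<times> 'r) set" where
  "acc A \<pi> 0 = {}"
| "acc A \<pi> (Suc i) =
     (if Suc i < (length \<pi> + 1) div 2 then acc A \<pi> i
      else if tent A \<pi> (Suc i) \<noteq> {} \<and> is_matching (acc A \<pi> i \<union> tent A \<pi> (Suc i))
           then acc A \<pi> i \<union> tent A \<pi> (Suc i)
           else acc A \<pi> i)"

definition ALGge :: "('l set \<Rightarrow> ('l \<times> 'r) set) \<Rightarrow> 'l list \<Rightarrow> nat \<Rightarrow> ('l \<times> 'r) set" where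
  "ALGge A \<pi> l = acc A \<pi> (length \<pi>) - acc A \<pi> (l - 1)"

end

theory Submission
  imports Defs
begin

text \<open>
  Condition on the prefix set P = L<=l and on the later tentative edges T = T>=(l+1). Then
  M(l) = A(P) is fixed, and the vertex arriving in round l is uniform on P: transposing it with
  any other vertex of P changes neither P nor any prefix set or arrival of a later round, hence
  not T. Its tentative edge is the edge of M(l) at that vertex, and since accepted edges are
  tentative, ALG>=(l+1) is contained in T, so by submodularity its marginal value with respect to
  ALG>=(l+1) is at least that with respect to T. Averaging over the uniform vertex and using
  submodularity once more, (1/l) sum_u v(M(l)_u | T) >= (1/l) v(M(l) | T) >= (1/l) (v(M(l)) - v(T)).
\<close>

lemma cond_pmf_pmf_of_set:
  assumes "finite X" "X \<inter> S \<noteq> {}"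
  shows "cond_pmf (pmf_of_set X) S = pmf_of_set (X \<inter> S)"
proof (rule pmf_eqI)
  fix x
  have "X \<noteq> {}" using assms(2) by blast
  then have "set_pmf (pmf_of_set X) \<inter> S \<noteq> {}" using assms by simp
  with assms \<open>X \<noteq> {}\<close> show "pmf (cond_pmf (pmf_of_set X) S) x = pmf (pmf_of_set (X \<inter> S)) x"
    by (auto simp: pmf_cond measure_pmf_of_set indicator_def Int_commute)
qed

lemma map_pmf_of_set_equal_fibres:
  assumes "finite S" "S \<noteq> {}"
    and fibres: "\<And>x y. x \<in> S \<Longrightarrow> y \<in> S \<Longrightarrow>
                   card {z \<in> S. g z = g x} = card {z \<in> S. g z = g y}"
  shows "map_pmf g (pmf_of_set S) = pmf_of_set (g ` S)"
proof -
  define F where "F u = {z \<in> S. g z = u}" for u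
  obtain x0 where "x0 \<in> S" using assms(2) by blast
  have S_UN: "S = (\<Union>u\<in>g ` S. F u)" by (auto simp: F_def)
  have "card (F u) = card (F (g x0))" if "u \<in> g ` S" for u
    using that fibres \<open>x0 \<in> S\<close> unfolding F_def by blast
  moreover have "disjoint_family_on F (g ` S)"
    by (auto simp: disjoint_family_on_def F_def)
  moreover have "F u \<noteq> {}" if "u \<in> g ` S" for u
    using that by (auto simp: F_def)
  ultimately have "pmf_of_set (\<Union>u\<in>g ` S. F u) = pmf_of_set (g ` S) \<bind> (\<lambda>u. pmf_of_set (F u))"
    using assms S_UN by (intro pmf_of_set_UN) auto
  then have "map_pmf g (pmf_of_set S) = pmf_of_set (g ` S) \<bind> (\<lambda>u. map_pmf g (pmf_of_set (F u)))"
    by (simp only: S_UN[symmetric] map_bind_pmf)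
  also have "\<dots> = pmf_of_set (g ` S) \<bind> return_pmf"
  proof (rule bind_pmf_cong[OF refl])
    fix u assume "u \<in> set_pmf (pmf_of_set (g ` S))"
    then have "F u \<noteq> {}" "finite (F u)"
      using assms by (auto simp: F_def)
    then have "map_pmf g (pmf_of_set (F u)) = map_pmf (\<lambda>_. u) (pmf_of_set (F u))"
      by (intro map_pmf_cong) (auto simp: F_def)
    then show "map_pmf g (pmf_of_set (F u)) = return_pmf u" by simp
  qed
  finally show ?thesis by (simp add: bind_return_pmf')
qed

definition monotone_submodular_on :: "'e set \<Rightarrow> ('e set \<Rightarrow> real) \<Rightarrow> bool" where
  "monotone_submodular_on E v \<longleftrightarrow>
     (\<forall>X Y. X \<subseteq> Y \<longrightarrow> Y \<subseteq> E \<longrightarrow> v X \<le> v Y) \<and>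
     (\<forall>X Y. X \<subseteq> E \<longrightarrow> Y \<subseteq> E \<longrightarrow> v (X \<union> Y) + v (X \<inter> Y) \<le> v X + v Y)"

lemma monotone_submodular_onD:
  assumes "monotone_submodular_on E v"
  shows monotone_submodular_on_mono: "X \<subseteq> Y \<Longrightarrow> Y \<subseteq> E \<Longrightarrow> v X \<le> v Y"
    and monotone_submodular_on_submod:
      "X \<subseteq> E \<Longrightarrow> Y \<subseteq> E \<Longrightarrow> v (X \<union> Y) + v (X \<inter> Y) \<le> v X + v Y"
  using assms by (auto simp: monotone_submodular_on_def)

lemma marg_antimono:
  assumes v: "monotone_submodular_on E v" and "X \<subseteq> Y" "Y \<subseteq> E" "S \<subseteq> E"
  shows "marg v S Y \<le> marg v S X"
proof -
  have "(S \<union> X) \<union> Y = S \<union> Y" using \<open>X \<subseteq> Y\<close> by blast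
  then have "v (S \<union> Y) + v ((S \<union> X) \<inter> Y) \<le> v (S \<union> X) + v Y"
    using monotone_submodular_on_submod[OF v, of "S \<union> X" Y] assms(2-4) by auto
  moreover have "v X \<le> v ((S \<union> X) \<inter> Y)"
    using assms(2-4) by (intro monotone_submodular_on_mono[OF v]) auto
  ultimately show ?thesis unfolding marg_def by linarith
qed

lemma marg_UN_le_sum:
  assumes v: "monotone_submodular_on E v"
    and "finite U" "\<And>u. u \<in> U \<Longrightarrow> F u \<subseteq> E" "T \<subseteq> E"
  shows "marg v (\<Union>u\<in>U. F u) T \<le> (\<Sum>u\<in>U. marg v (F u) T)"
  using assms(2,3)
proof (induction U rule: finite_induct)
  case empty
  then show ?case by (simp add: marg_def)
next
  case (insert x U)
  let ?B = "\<Union>u\<in>U. F u"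
  have "marg v (\<Union>u\<in>insert x U. F u) T = marg v (F x) (?B \<union> T) + marg v ?B T"
    unfolding marg_def by (simp add: Un_assoc)
  moreover have "marg v (F x) (?B \<union> T) \<le> marg v (F x) T"
    using insert.prems \<open>T \<subseteq> E\<close> by (intro marg_antimono[OF v]) auto
  ultimately show ?case using insert by simp
qed

lemma diff_le_sum_marg_fst_classes:
  assumes v: "monotone_submodular_on E v"
    and "finite U" "fst ` M \<subseteq> U" "M \<subseteq> E" "T \<subseteq> E"
  shows "v M - v T \<le> (\<Sum>u\<in>U. marg v {e \<in> M. fst e = u} T)"
proof -
  have "M = (\<Union>u\<in>U. {e \<in> M. fst e = u})" using assms(3) by blast
  then have "marg v M T \<le> (\<Sum>u\<in>U. marg v {e \<in> M. fst e = u} T)"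
    using marg_UN_le_sum[OF v \<open>finite U\<close>, where F = "\<lambda>u. {e \<in> M. fst e = u}" and T = T] assms(4,5)
    by auto
  moreover have "v M \<le> v (M \<union> T)"
    using assms(4,5) by (intro monotone_submodular_on_mono[OF v]) auto
  ultimately show ?thesis unfolding marg_def by linarith
qed

lemma acc_mono: "i \<le> j \<Longrightarrow> acc A \<pi> i \<subseteq> acc A \<pi> j"
  by (rule lift_Suc_mono_le[where f = "acc A \<pi>"]) auto

lemma acc_diff_subset_tent: "acc A \<pi> j - acc A \<pi> i \<subseteq> (\<Union>k\<in>{Suc i..j}. tent A \<pi> k)"
proof (induction j)
  case 0
  then show ?case by simp
next
  case (Suc j)
  have "acc A \<pi> (Suc j) \<subseteq> acc A \<pi> j \<union> tent A \<pi> (Suc j)" by auto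
  moreover have "acc A \<pi> (Suc j) \<subseteq> acc A \<pi> i" if "Suc j \<le> i" using that by (rule acc_mono)
  ultimately show ?case using Suc.IH by (fastforce simp: not_le)
qed

lemma ALGge_subset_Tge: "ALGge A \<pi> k \<subseteq> Tge A \<pi> k"
  using acc_diff_subset_tent[of A \<pi> "length \<pi>" "k - 1"]
  unfolding ALGge_def Tge_def by (force simp: Suc_diff_Suc)

lemma tent_subset:
  assumes "\<And>L'. L' \<subseteq> set \<pi> \<Longrightarrow> A L' \<subseteq> E"
  shows "tent A \<pi> l \<subseteq> E"
  using assms[OF set_take_subset] by (auto simp: tent_def)

lemma Tge_subset:
  assumes "\<And>L'. L' \<subseteq> set \<pi> \<Longrightarrow> A L' \<subseteq> E"
  shows "Tge A \<pi> k \<subseteq> E"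
proof -
  have "tent A \<pi> i \<subseteq> E" for i using assms by (rule tent_subset)
  then show ?thesis by (auto simp: Tge_def)
qed

lemma marg_tent_Tge_le_ALGge:
  assumes "monotone_submodular_on E v" "\<And>L'. L' \<subseteq> set \<pi> \<Longrightarrow> A L' \<subseteq> E"
  shows "marg v (tent A \<pi> l) (Tge A \<pi> k) \<le> marg v (tent A \<pi> l) (ALGge A \<pi> k)"
  using marg_antimono[OF assms(1) ALGge_subset_Tge Tge_subset tent_subset] assms(2) by blast

lemma finite_arrival_orders: "finite L \<Longrightarrow> finite (arrival_orders L)"
  unfolding arrival_orders_def
  by (rule finite_subset[OF _ finite_subset_distinct[of L]]) auto

lemma length_arrival_order: "\<pi> \<in> arrival_orders L \<Longrightarrow> length \<pi> = card L"
  by (auto simp: arrival_orders_def distinct_card)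

lemma nth_notin_set_take:
  assumes "distinct xs" "l \<le> i" "i < length xs"
  shows "xs ! i \<notin> set (take l xs)"
proof -
  have "xs ! i \<in> set (drop l xs)"
    using assms(2,3) by (simp add: in_set_conv_nth) (metis add_diff_inverse_nat diff_less_mono not_le)
  then show ?thesis using set_take_disj_set_drop_if_distinct[OF assms(1) order.refl] by blast
qed

lemma Tge_map_transpose:
  assumes "distinct \<pi>" "u \<in> set (take l \<pi>)" "w \<in> set (take l \<pi>)"
  shows "Tge A (map (Transposition.transpose u w) \<pi>) (l + 1) = Tge A \<pi> (l + 1)"
proof -
  let ?\<tau> = "Transposition.transpose u w"
  have "tent A (map ?\<tau> \<pi>) i = tent A \<pi> i" if "l + 1 \<le> i" "i \<le> length \<pi>" for i
  proof -
    have "set (take l \<pi>) \<subseteq> set (take i \<pi>)" using that by (intro set_take_subset_set_take) simp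
    then have "set (take i (map ?\<tau> \<pi>)) = set (take i \<pi>)"
      using assms by (simp add: take_map subset_iff)
    moreover have "\<pi> ! (i - 1) \<notin> set (take l \<pi>)"
      using that assms(1) by (intro nth_notin_set_take) auto
    then have "\<pi> ! (i - 1) \<noteq> u" "\<pi> ! (i - 1) \<noteq> w" using assms(2,3) by auto
    then have "map ?\<tau> \<pi> ! (i - 1) = \<pi> ! (i - 1)" using that by simp
    ultimately show ?thesis by (simp add: tent_def)
  qed
  then show ?thesis unfolding Tge_def by (intro SUP_cong) auto
qed

definition orders_given ::
    "('l set \<Rightarrow> ('l \<times> 'r) set) \<Rightarrow> 'l set \<Rightarrow> nat \<Rightarrow> 'l set \<Rightarrow> ('l \<times> 'r) set \<Rightarrow> 'l list set" where
  "orders_given A L l P T = {\<pi> \<in> arrival_orders L. set (take l \<pi>) = P \<and> Tge A \<pi> (l + 1) = T}"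

lemma finite_orders_given: "finite L \<Longrightarrow> finite (orders_given A L l P T)"
  unfolding orders_given_def by (rule finite_subset[OF _ finite_arrival_orders]) auto

lemma nth_in_orders_given:
  assumes "\<pi> \<in> orders_given A L l P T" "i < l" "l \<le> card L"
  shows "\<pi> ! i \<in> P"
proof -
  have "length \<pi> = card L"
    using assms(1) length_arrival_order by (auto simp: orders_given_def)
  then have "i < length (take l \<pi>)" using assms(2,3) by simp
  then have "take l \<pi> ! i \<in> set (take l \<pi>)" by (rule nth_mem)
  then show ?thesis using assms by (simp add: orders_given_def)
qed

lemma map_transpose_in_orders_given:
  assumes "\<pi> \<in> orders_given A L l P T" "u \<in> P" "w \<in> P"
  shows "map (Transposition.transpose u w) \<pi> \<in> orders_given A L l P T"
proof -
  let ?\<tau> = "Transposition.transpose u w"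
  have \<pi>: "distinct \<pi>" "set \<pi> = L" "set (take l \<pi>) = P" "Tge A \<pi> (l + 1) = T"
    using assms(1) by (auto simp: orders_given_def arrival_orders_def)
  then have "u \<in> L" "w \<in> L" using assms(2,3) by (auto dest: in_set_takeD)
  then have "map ?\<tau> \<pi> \<in> arrival_orders L"
    using \<pi>(1,2) by (auto simp: arrival_orders_def distinct_map)
  moreover have "set (take l (map ?\<tau> \<pi>)) = P"
    using assms(2,3) \<pi>(3) by (simp add: take_map)
  moreover have "Tge A (map ?\<tau> \<pi>) (l + 1) = T"
    using Tge_map_transpose[where A = A, OF \<pi>(1)] assms(2,3) \<pi>(3,4) by simp
  ultimately show ?thesis by (simp add: orders_given_def)
qed

lemma card_orders_given_last_eq:
  assumes "u \<in> P" "w \<in> P" "1 \<le> l" "l \<le> card L"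
  shows "card {\<pi> \<in> orders_given A L l P T. \<pi> ! (l - 1) = u}
       = card {\<pi> \<in> orders_given A L l P T. \<pi> ! (l - 1) = w}"
proof (rule bij_betw_same_card)
  let ?\<tau> = "Transposition.transpose u w"
  have swap: "map ?\<tau> \<pi> \<in> {\<pi> \<in> orders_given A L l P T. \<pi> ! (l - 1) = ?\<tau> x}"
    if "\<pi> \<in> {\<pi> \<in> orders_given A L l P T. \<pi> ! (l - 1) = x}" for \<pi> x
  proof -
    have "length \<pi> = card L"
      using that length_arrival_order by (auto simp: orders_given_def)
    then show ?thesis
      using that assms map_transpose_in_orders_given[of \<pi> A L l P T u w] by auto
  qed
  show "bij_betw (map ?\<tau>) {\<pi> \<in> orders_given A L l P T. \<pi> ! (l - 1) = u}
                          {\<pi> \<in> orders_given A L l P T. \<pi> ! (l - 1) = w}"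
    by (rule bij_betw_byWitness[where f' = "map ?\<tau>"]) (use swap[of _ u] swap[of _ w] in auto)
qed

lemma last_arrival_uniform:
  assumes "finite L" "orders_given A L l P T \<noteq> {}" "1 \<le> l" "l \<le> card L"
  shows "map_pmf (\<lambda>\<pi>. \<pi> ! (l - 1)) (pmf_of_set (orders_given A L l P T)) = pmf_of_set P"
proof -
  let ?S = "orders_given A L l P T"
  have last_in: "\<pi> ! (l - 1) \<in> P" if "\<pi> \<in> ?S" for \<pi>
    using that assms(3,4) by (intro nth_in_orders_given) auto
  obtain \<pi>0 where "\<pi>0 \<in> ?S" using assms(2) by blast
  have "w \<in> (\<lambda>\<pi>. \<pi> ! (l - 1)) ` ?S" if "w \<in> P" for w
  proof
    let ?\<pi> = "map (Transposition.transpose (\<pi>0 ! (l - 1)) w) \<pi>0"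
    show "?\<pi> \<in> ?S"
      using \<open>\<pi>0 \<in> ?S\<close> last_in that by (intro map_transpose_in_orders_given) auto
    have "length \<pi>0 = card L"
      using \<open>\<pi>0 \<in> ?S\<close> length_arrival_order by (auto simp: orders_given_def)
    then show "w = ?\<pi> ! (l - 1)" using assms(3,4) by simp
  qed
  then have "(\<lambda>\<pi>. \<pi> ! (l - 1)) ` ?S = P" using last_in by blast
  moreover have "map_pmf (\<lambda>\<pi>. \<pi> ! (l - 1)) (pmf_of_set ?S) = pmf_of_set ((\<lambda>\<pi>. \<pi> ! (l - 1)) ` ?S)"
    using finite_orders_given[OF assms(1)] assms(2)
  proof (rule map_pmf_of_set_equal_fibres)
    fix \<pi> \<rho> assume "\<pi> \<in> ?S" "\<rho> \<in> ?S"
    then show "card {\<sigma> \<in> ?S. \<sigma> ! (l - 1) = \<pi> ! (l - 1)} = card {\<sigma> \<in> ?S. \<sigma> ! (l - 1) = \<rho> ! (l - 1)}"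
      using last_in assms(3,4) by (intro card_orders_given_last_eq) auto
  qed
  ultimately show ?thesis by simp
qed

lemma marg_edge_at_last_le:
  assumes v: "monotone_submodular_on E v" and "\<pi> \<in> orders_given A L l P T"
    and A_E: "\<And>L'. L' \<subseteq> L \<Longrightarrow> A L' \<subseteq> E"
  shows "marg v {e \<in> A P. fst e = \<pi> ! (l - 1)} T \<le> marg v (tent A \<pi> l) (ALGge A \<pi> (l + 1))"
proof -
  have "tent A \<pi> l = {e \<in> A P. fst e = \<pi> ! (l - 1)}" "Tge A \<pi> (l + 1) = T" "set \<pi> = L"
    using assms(2) by (auto simp: orders_given_def arrival_orders_def tent_def)
  then show ?thesis
    using marg_tent_Tge_le_ALGge[OF v, where A = A and \<pi> = \<pi> and l = l and k = "l + 1"] A_E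
    by auto
qed

theorem mainTheorem11:
  fixes L :: "'l set" and R :: "'r set" and E :: "('l \<times> 'r) set"
    and v :: "('l \<times> 'r) set \<Rightarrow> real"
    and A :: "'l set \<Rightarrow> ('l \<times> 'r) set"
    and n l :: nat and \<alpha> :: real and \<pi>0 :: "'l list"
  assumes finL: "finite L" and finR: "finite R" and cardL: "card L = n"
    and E_sub: "E \<subseteq> L \<times> R"
    and v_nonneg: "\<And>X. X \<subseteq> E \<Longrightarrow> v X \<ge> 0"
    and v_mono: "\<And>X Y. X \<subseteq> Y \<Longrightarrow> Y \<subseteq> E \<Longrightarrow> v X \<le> v Y"
    and v_submod: "\<And>X Y. X \<subseteq> E \<Longrightarrow> Y \<subseteq> E \<Longrightarrow> v (X \<union> Y) + v (X \<inter> Y) \<le> v X + v Y"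
    and alpha: "0 < \<alpha>" "\<alpha> \<le> 1"
    and A_match: "\<And>L'. L' \<subseteq> L \<Longrightarrow> A L' \<in> matchings_of E L' R"
    and A_approx: "\<And>L' M. L' \<subseteq> L \<Longrightarrow> M \<in> matchings_of E L' R \<Longrightarrow> \<alpha> * v M \<le> v (A L')"
    and l_lo: "(n + 1) div 2 \<le> l" and l_pos: "1 \<le> l" and l_hi: "l \<le> n"
    and pi0: "\<pi>0 \<in> arrival_orders L"
  shows
    "measure_pmf.expectation
       (cond_pmf (pmf_of_set (arrival_orders L))
          {\<pi> \<in> arrival_orders L. set (take l \<pi>) = set (take l \<pi>0)
                                 \<and> Tge A \<pi> (l + 1) = Tge A \<pi>0 (l + 1)})
       (\<lambda>\<pi>. marg v (tent A \<pi> l) (ALGge A \<pi> (l + 1)))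
     \<ge> (1 / real l) * (v (A (set (take l \<pi>0))) - v (Tge A \<pi>0 (l + 1)))"
proof -
  define P where "P = set (take l \<pi>0)"
  define T where "T = Tge A \<pi>0 (l + 1)"
  define S where "S = orders_given A L l P T"
  define gain where "gain u = marg v {e \<in> A P. fst e = u} T" for u
  have v: "monotone_submodular_on E v"
    using v_mono v_submod by (simp add: monotone_submodular_on_def)
  have A_E: "A L' \<subseteq> E" and A_fst: "fst ` A L' \<subseteq> L'" if "L' \<subseteq> L" for L'
    using A_match[OF that] by (auto simp: matchings_of_def)
  have "S \<noteq> {}" "finite S" "set \<pi>0 = L"
    using pi0 finite_orders_given[OF finL]
    by (auto simp: S_def P_def T_def orders_given_def arrival_orders_def)
  have "P \<subseteq> L" "finite P" "card P = l"
    using pi0 l_hi length_arrival_order[OF pi0]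
    by (auto simp: P_def arrival_orders_def distinct_card cardL dest: in_set_takeD)
  have "T \<subseteq> E" unfolding T_def using A_E \<open>set \<pi>0 = L\<close> by (intro Tge_subset) auto
  then have "(1 / real l) * (v (A P) - v T) \<le> (\<Sum>u\<in>P. gain u) / card P"
    using diff_le_sum_marg_fst_classes[OF v \<open>finite P\<close> A_fst A_E] \<open>P \<subseteq> L\<close> \<open>card P = l\<close> l_pos
    unfolding gain_def by (simp add: divide_right_mono)
  also have "\<dots> = measure_pmf.expectation (pmf_of_set P) gain"
    using \<open>finite P\<close> \<open>card P = l\<close> l_pos by (subst integral_pmf_of_set) auto
  also have "pmf_of_set P = map_pmf (\<lambda>\<pi>. \<pi> ! (l - 1)) (pmf_of_set S)"
    unfolding S_def using \<open>S \<noteq> {}\<close> finL l_pos l_hi cardL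
    by (intro last_arrival_uniform[symmetric]) (auto simp: S_def)
  also have "measure_pmf.expectation (map_pmf (\<lambda>\<pi>. \<pi> ! (l - 1)) (pmf_of_set S)) gain
      \<le> measure_pmf.expectation (pmf_of_set S) (\<lambda>\<pi>. marg v (tent A \<pi> l) (ALGge A \<pi> (l + 1)))"
  proof -
    have "gain (\<pi> ! (l - 1)) \<le> marg v (tent A \<pi> l) (ALGge A \<pi> (l + 1))" if "\<pi> \<in> S" for \<pi>
      unfolding gain_def using that A_E by (intro marg_edge_at_last_le[OF v]) (auto simp: S_def)
    then show ?thesis
      using \<open>S \<noteq> {}\<close> \<open>finite S\<close>
      by (simp add: integral_pmf_of_set divide_right_mono sum_mono)
  qed
  also have "pmf_of_set S = cond_pmf (pmf_of_set (arrival_orders L)) S"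
    using cond_pmf_pmf_of_set[OF finite_arrival_orders[OF finL], of S] \<open>S \<noteq> {}\<close>
    by (simp add: Int_absorb1 S_def orders_given_def)
  finally show ?thesis unfolding S_def P_def T_def orders_given_def .
qed

end
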